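(* Let $d\ge1$, $\lambda>0$, $\delta>0$, and let $f:\mathbb{R}^d\to\mathbb{R}$ satisfy: (A1) $f$ is continuous and has at least one minimizer; (A2) $\int_{\mathbb{R}^d}\exp(-f(y)/\delta)\,dy<+\infty$. Assume there is $C_P(\delta)<\infty$ such that for every $x\in\mathbb{R}^d$ the measure $\mu_x$ satisfies a Poincaré inequality with constant $C_P(\delta,x)\le C_P(\delta)$. If $\lambda\ge C_P(\delta)/\delta$, then $f^{\lambda,\delta}$ is convex.
   Context: $\mu_x$ is the probability measure on $\mathbb{R}^d$ with density proportional to $\exp(-f(y)/\delta)\exp(-\|y-x\|^2/(2\lambda\delta))$. A probability measure $\mu$ satisfies a Poincaré inequality with constant $C_P>0$ if $\int|g-\int g\,d\mu|^2d\mu\le C_P\int\|\nabla g\|^2d\mu$ for every smooth, suitably integrable $g$. The soft Moreau envelope is $f^{\lambda,\delta}(x)=-\delta\log\mathbb{E}_{y\sim\mathcal N(x,\lambda\delta I)}[\exp(-f(y)/\delta)]$. *)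

theory Defs
  imports "HOL-Analysis.Analysis"
begin

definition mu_weight :: "('a::euclidean_space \<Rightarrow> real) \<Rightarrow> real \<Rightarrow> real \<Rightarrow> 'a \<Rightarrow> 'a \<Rightarrow> real" where
  "mu_weight f lam del x y = exp (- f y / del) * exp (- (norm (y - x))\<^sup>2 / (2 * lam * del))"

definition mu :: "('a::euclidean_space \<Rightarrow> real) \<Rightarrow> real \<Rightarrow> real \<Rightarrow> 'a \<Rightarrow> 'a measure" where
  "mu f lam del x = density lborel
     (\<lambda>y. ennreal (mu_weight f lam del x y / (\<integral>z. mu_weight f lam del x z \<partial>lborel)))"

definition poincare :: "'a::euclidean_space measure \<Rightarrow> real \<Rightarrow> bool" where
  "poincare M C \<longleftrightarrow> C > 0 \<and>
     (\<forall>g G. (\<forall>y. GDERIV g y :> G y) \<longrightarrow> continuous_on UNIV G \<longrightarrow>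
        integrable M (\<lambda>y. (g y)\<^sup>2) \<longrightarrow> integrable M (\<lambda>y. (norm (G y))\<^sup>2) \<longrightarrow>
        (\<integral>y. (g y - (\<integral>z. g z \<partial>M))\<^sup>2 \<partial>M) \<le> C * (\<integral>y. (norm (G y))\<^sup>2 \<partial>M))"

(* soft Moreau envelope: -delta * log E_{y ~ N(x, lambda delta I)} [exp(-f(y)/delta)] *)
definition soft_moreau :: "('a::euclidean_space \<Rightarrow> real) \<Rightarrow> real \<Rightarrow> real \<Rightarrow> 'a \<Rightarrow> real" where
  "soft_moreau f lam del x = - del * ln
     ((2 * pi * lam * del) powr (- real DIM('a) / 2) *
      (\<integral>y. exp (- (norm (y - x))\<^sup>2 / (2 * lam * del)) * exp (- f y / del) \<partial>lborel))"

end

theory Submission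
  imports Defs "HOL-Probability.Probability_Measure"
begin

(* Along a line x + t v the soft Moreau envelope is, up to an additive constant, -delta ln Z(t),
   where Z(t) is the total mass of the weight of mu_(x + t v). Differentiating under the integral
   sign, with k = lambda delta and r(y) = <y - (x + t v), v>, gives Z'/Z = E r / k and
   Z''/Z = E r^2 / k^2 - |v|^2 / k, expectations taken under mu_(x + t v). Hence
   (-ln Z)'' = (k |v|^2 - Var r) / k^2, and Var r <= C_P |v|^2 <= k |v|^2 is the Poincare
   inequality applied to the affine function r, whose gradient is the constant v. *)

lemma has_real_derivative_integral_dominated:
  fixes F F' :: "real \<Rightarrow> 'a \<Rightarrow> real"
  assumes integrable: "\<And>s. integrable M (F s)"
    and measurable: "\<And>s. F' s \<in> borel_measurable M"
    and deriv: "\<And>s y. ((\<lambda>s. F s y) has_real_derivative F' s y) (at s)"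
    and dominated: "\<And>s y. \<bar>F' s y\<bar> \<le> g y" and "integrable M g"
  shows "((\<lambda>s. \<integral>y. F s y \<partial>M) has_real_derivative (\<integral>y. F' t y \<partial>M)) (at t)"
  unfolding has_field_derivative_iff tendsto_at_iff_sequentially
proof (intro allI impI)
  fix X :: "nat \<Rightarrow> real"
  assume X: "\<forall>i. X i \<in> UNIV - {t}" and "X \<longlonglongrightarrow> t"
  define Q where "Q i y = (F (X i) y - F t y) / (X i - t)" for i y
  have "(\<lambda>i. \<integral>y. Q i y \<partial>M) \<longlonglongrightarrow> (\<integral>y. F' t y \<partial>M)"
  proof (rule integral_dominated_convergence[where w=g])
    show "Q i \<in> borel_measurable M" for i
      unfolding Q_def using integrable by measurable
    have "((\<lambda>s. (F s y - F t y) / (s - t)) \<longlongrightarrow> F' t y) (at t)" for y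
      using deriv unfolding has_field_derivative_iff .
    then show "AE y in M. (\<lambda>i. Q i y) \<longlonglongrightarrow> F' t y"
      using X \<open>X \<longlonglongrightarrow> t\<close> unfolding Q_def tendsto_at_iff_sequentially comp_def by blast
    have "\<bar>F (X i) y - F t y\<bar> \<le> g y * \<bar>X i - t\<bar>" for i y
      using field_differentiable_bound[of UNIV "\<lambda>s. F s y" "\<lambda>s. F' s y" "g y" "X i" t]
        deriv dominated by (simp add: has_field_derivative_at_within)
    then show "AE y in M. norm (Q i y) \<le> g y" for i
      using X by (auto simp: Q_def abs_divide divide_le_eq)
  qed (use assms in auto)
  moreover have "((\<lambda>s. ((\<integral>y. F s y \<partial>M) - (\<integral>y. F t y \<partial>M)) / (s - t)) \<circ> X) i
      = (\<integral>y. Q i y \<partial>M)" for i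
    using integrable by (simp add: Q_def integral_diff)
  ultimately show "((\<lambda>s. ((\<integral>y. F s y \<partial>M) - (\<integral>y. F t y \<partial>M)) / (s - t)) \<circ> X)
      \<longlonglongrightarrow> (\<integral>y. F' t y \<partial>M)"
    by (simp add: comp_def)
qed

lemma power_abs_mult_exp_neg_square_le:
  fixes s k :: real
  assumes "k > 0" and "j \<le> 2"
  shows "\<bar>s\<bar> ^ j * exp (- s\<^sup>2 / (2 * k)) \<le> (1 + 2 * k) ^ j"
proof -
  define w where "w = s\<^sup>2 / (2 * k)"
  have e_le_1: "exp (- w) \<le> 1"
    using \<open>k > 0\<close> by (simp add: w_def)
  have "w \<le> exp w"
    using exp_ge_add_one_self[of w] by linarith
  then have "w * exp (- w) \<le> exp w * exp (- w)"
    by (intro mult_right_mono) auto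
  then have "w * exp (- w) \<le> 1"
    by (simp add: exp_minus_inverse)
  then have square: "s\<^sup>2 * exp (- w) \<le> 2 * k"
    using \<open>k > 0\<close> by (simp add: w_def field_simps)
  have "\<bar>s\<bar> \<le> 1 + s\<^sup>2"
    using power2_diff[of "\<bar>s\<bar>" 1] zero_le_power2[of "\<bar>s\<bar> - 1"] by simp
  then have "\<bar>s\<bar> * exp (- w) \<le> (1 + s\<^sup>2) * exp (- w)"
    by (intro mult_right_mono) auto
  then have linear: "\<bar>s\<bar> * exp (- w) \<le> 1 + 2 * k"
    using e_le_1 square unfolding distrib_right by linarith
  have "2 * k \<le> (1 + 2 * k)\<^sup>2"
    using \<open>k > 0\<close> by (simp add: power2_eq_square algebra_simps)
  moreover have "j = 0 \<or> j = 1 \<or> j = 2"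
    using \<open>j \<le> 2\<close> by auto
  ultimately show ?thesis
    using e_le_1 linear square by (auto simp: w_def power2_abs)
qed

lemma convex_on_neg_ln:
  fixes Z Z' Z'' :: "real \<Rightarrow> real"
  assumes pos: "\<And>t. Z t > 0"
    and Z': "\<And>t. (Z has_real_derivative Z' t) (at t)"
    and Z'': "\<And>t. (Z' has_real_derivative Z'' t) (at t)"
    and log_concave: "\<And>t. Z'' t * Z t \<le> (Z' t)\<^sup>2"
  shows "convex_on UNIV (\<lambda>t. - ln (Z t))"
proof (rule f''_ge0_imp_convex)
  show "((\<lambda>t. - ln (Z t)) has_real_derivative - (Z' t / Z t)) (at t)" for t
    using pos[of t] by (auto intro!: derivative_eq_intros Z' simp: field_simps)
  show "((\<lambda>t. - (Z' t / Z t)) has_real_derivative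
      - ((Z'' t * Z t - Z' t * Z' t) / (Z t * Z t))) (at t)" for t
    using pos[of t] by (intro DERIV_minus DERIV_divide Z' Z'') auto
  show "0 \<le> - ((Z'' t * Z t - Z' t * Z' t) / (Z t * Z t))" for t
    using log_concave[of t] by (simp add: power2_eq_square divide_nonpos_nonneg)
qed simp

lemma convex_on_if_convex_on_lines:
  fixes \<phi> :: "'a::real_vector \<Rightarrow> real"
  assumes lines: "\<And>x v. convex_on UNIV (\<lambda>t. \<phi> (x + t *\<^sub>R v))"
  shows "convex_on UNIV \<phi>"
proof (rule convex_onI)
  fix u :: real and x y :: 'a
  assume "0 < u" "u < 1"
  have "\<phi> (x + u *\<^sub>R (y - x)) \<le> (1 - u) * \<phi> (x + 0 *\<^sub>R (y - x)) + u * \<phi> (x + 1 *\<^sub>R (y - x))"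
    using convex_onD[OF lines[of x "y - x"], of u 0 1] \<open>0 < u\<close> \<open>u < 1\<close> by simp
  moreover have "x + u *\<^sub>R (y - x) = (1 - u) *\<^sub>R x + u *\<^sub>R y"
    by (simp add: algebra_simps)
  ultimately show "\<phi> ((1 - u) *\<^sub>R x + u *\<^sub>R y) \<le> (1 - u) * \<phi> x + u * \<phi> y"
    by simp
qed simp

lemma poincare_variance_inner_le:
  fixes M :: "'a::euclidean_space measure"
  assumes "prob_space M" and "poincare M C"
    and "integrable M (\<lambda>y. (inner (y - x) v)\<^sup>2)"
  shows "prob_space.variance M (\<lambda>y. inner (y - x) v) \<le> C * (norm v)\<^sup>2"
proof -
  interpret prob_space M by fact
  have "GDERIV (\<lambda>y. inner (y - x) v) y :> v" for y
    unfolding gderiv_def by (auto intro!: derivative_eq_intros)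
  then have "variance (\<lambda>y. inner (y - x) v) \<le> C * expectation (\<lambda>_. (norm v)\<^sup>2)"
    using \<open>poincare M C\<close> assms(3) unfolding poincare_def
    by (elim conjE allE[where x="\<lambda>y. inner (y - x) v"] allE[where x="\<lambda>_::'a. v"]) auto
  then show ?thesis
    by (simp add: prob_space)
qed

lemma mu_weight_pos: "mu_weight f lam del x y > 0"
  by (simp add: mu_weight_def)

lemma inner_diff_line: "inner (y - (x + t *\<^sub>R v)) v = inner (y - x) v - t * (norm v)\<^sup>2"
  by (simp add: power2_norm_eq_inner inner_diff_left inner_add_left)

lemma has_real_derivative_inner_line:
  "((\<lambda>t. inner (y - (x + t *\<^sub>R v)) v) has_real_derivative - (norm v)\<^sup>2) (at t)"
  unfolding inner_diff_line by (auto intro!: derivative_eq_intros)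

lemma has_real_derivative_mu_weight_line:
  fixes f :: "'a::euclidean_space \<Rightarrow> real"
  assumes "lam * del \<noteq> 0"
  shows "((\<lambda>t. mu_weight f lam del (x + t *\<^sub>R v) y) has_real_derivative
      mu_weight f lam del (x + t *\<^sub>R v) y * (inner (y - (x + t *\<^sub>R v)) v / (lam * del))) (at t)"
proof -
  have norm_sq: "(norm (y - (x + t *\<^sub>R v)))\<^sup>2
      = (norm (y - x))\<^sup>2 - 2 * t * inner (y - x) v + t\<^sup>2 * (norm v)\<^sup>2" for t
    unfolding power2_norm_eq_inner
    by (simp add: inner_diff_left inner_diff_right inner_add_left inner_add_right inner_commute
        algebra_simps power2_eq_square)
  show ?thesis
    unfolding mu_weight_def inner_diff_line norm_sq using assms
    by (auto intro!: derivative_eq_intros simp: field_simps power2_eq_square)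
qed

definition mu_normaliser :: "('a::euclidean_space \<Rightarrow> real) \<Rightarrow> real \<Rightarrow> real \<Rightarrow> 'a \<Rightarrow> real" where
  "mu_normaliser f lam del x = (\<integral>y. mu_weight f lam del x y \<partial>lborel)"

definition weight_moment ::
    "('a::euclidean_space \<Rightarrow> real) \<Rightarrow> real \<Rightarrow> real \<Rightarrow> 'a \<Rightarrow> nat \<Rightarrow> 'a \<Rightarrow> real" where
  "weight_moment f lam del v j x = (\<integral>y. mu_weight f lam del x y * (inner (y - x) v) ^ j \<partial>lborel)"

lemma weight_moment_0[simp]: "weight_moment f lam del v 0 x = mu_normaliser f lam del x"
  by (simp add: weight_moment_def mu_normaliser_def)

lemma mu_eq_density:
  "mu f lam del x
    = density lborel (\<lambda>y. ennreal (mu_weight f lam del x y / mu_normaliser f lam del x))"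
  unfolding mu_def mu_normaliser_def ..

lemma soft_moreau_eq_ln_mu_normaliser:
  fixes f :: "'a::euclidean_space \<Rightarrow> real"
  shows "soft_moreau f lam del x
    = - del * ln ((2 * pi * lam * del) powr (- real DIM('a) / 2) * mu_normaliser f lam del x)"
  by (simp add: soft_moreau_def mu_normaliser_def mu_weight_def mult.commute)

locale soft_moreau_kernel =
  fixes f :: "'a::euclidean_space \<Rightarrow> real" and lam del :: real
  assumes lam_pos: "lam > 0" and del_pos: "del > 0"
    and f_measurable[measurable]: "f \<in> borel_measurable lborel"
    and integrable_exp_f: "integrable lborel (\<lambda>y. exp (- f y / del))"
begin

lemma mu_weight_measurable[measurable]: "mu_weight f lam del x \<in> borel_measurable lborel"
  unfolding mu_weight_def by measurable

lemma mu_weight_inner_power_bound: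
  assumes "j \<le> 2"
  shows "\<bar>mu_weight f lam del x y * (inner (y - x) v) ^ j\<bar>
    \<le> ((1 + 2 * (lam * del)) * norm v) ^ j * exp (- f y / del)"
proof -
  define s where "s = norm (y - x)"
  have "\<bar>inner (y - x) v\<bar> ^ j \<le> (s * norm v) ^ j"
    unfolding s_def by (intro power_mono Cauchy_Schwarz_ineq2) simp
  then have "\<bar>mu_weight f lam del x y * (inner (y - x) v) ^ j\<bar>
      \<le> exp (- f y / del) * (\<bar>s\<bar> ^ j * exp (- s\<^sup>2 / (2 * (lam * del)))) * norm v ^ j"
    by (simp add: mu_weight_def s_def abs_mult power_abs power_mult_distrib mult.assoc
        mult.left_commute mult_left_mono)
  also have "\<dots> \<le> exp (- f y / del) * (1 + 2 * (lam * del)) ^ j * norm v ^ j"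
    using power_abs_mult_exp_neg_square_le[of "lam * del" j s] lam_pos del_pos assms
    by (intro mult_right_mono mult_left_mono) auto
  finally show ?thesis
    by (simp only: power_mult_distrib mult_ac)
qed

lemma integrable_mu_weight_inner_power:
  assumes "j \<le> 2"
  shows "integrable lborel (\<lambda>y. mu_weight f lam del x y * (inner (y - x) v) ^ j)"
proof (rule Bochner_Integration.integrable_bound)
  show "integrable lborel (\<lambda>y. ((1 + 2 * (lam * del)) * norm v) ^ j * exp (- f y / del))"
    using integrable_exp_f by simp
  show "AE y in lborel. norm (mu_weight f lam del x y * (inner (y - x) v) ^ j)
      \<le> norm (((1 + 2 * (lam * del)) * norm v) ^ j * exp (- f y / del))"
    using mu_weight_inner_power_bound[OF assms]
    by (intro AE_I2) (metis abs_ge_self order_trans real_norm_def)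
qed simp

lemma integrable_mu_weight: "integrable lborel (mu_weight f lam del x)"
  using integrable_mu_weight_inner_power[of 0] by simp

lemma mu_normaliser_pos: "mu_normaliser f lam del x > 0"
proof -
  have nonneg: "AE y in lborel. 0 \<le> mu_weight f lam del x y"
    by (intro AE_I2 less_imp_le mu_weight_pos)
  have "\<not> (AE y in lborel. mu_weight f lam del x y = 0)"
  proof
    assume "AE y in lborel. mu_weight f lam del x y = 0"
    then have "AE y in (lborel :: 'a measure). False"
      by eventually_elim (metis mu_weight_pos less_irrefl)
    then show False
      by (simp add: eventually_False ae_filter_eq_bot_iff)
  qed
  then show ?thesis
    using integral_nonneg_eq_0_iff_AE[OF integrable_mu_weight nonneg]
      integral_nonneg_AE[OF nonneg]
    unfolding mu_normaliser_def by linarith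
qed

lemma prob_space_mu: "prob_space (mu f lam del x)"
proof
  have "integrable lborel (\<lambda>y. mu_weight f lam del x y / mu_normaliser f lam del x)"
    by (intro integrable_divide integrable_mu_weight)
  moreover have "AE y in lborel. 0 \<le> mu_weight f lam del x y / mu_normaliser f lam del x"
    by (intro AE_I2 less_imp_le divide_pos_pos mu_weight_pos mu_normaliser_pos)
  ultimately have "(\<integral>\<^sup>+y. ennreal (mu_weight f lam del x y / mu_normaliser f lam del x) \<partial>lborel)
      = ennreal (\<integral>y. mu_weight f lam del x y / mu_normaliser f lam del x \<partial>lborel)"
    by (rule nn_integral_eq_integral)
  also have "(\<integral>y. mu_weight f lam del x y / mu_normaliser f lam del x \<partial>lborel) = 1"
    using mu_normaliser_pos[of x] unfolding mu_normaliser_def by simp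
  finally show "emeasure (mu f lam del x) (space (mu f lam del x)) = 1"
    unfolding mu_eq_density by (simp add: emeasure_density)
qed

lemma
  assumes "j \<le> 2"
  shows integrable_mu_inner_power: "integrable (mu f lam del x) (\<lambda>y. (inner (y - x) v) ^ j)"
    and integral_mu_inner_power:
      "(\<integral>y. (inner (y - x) v) ^ j \<partial>mu f lam del x)
        = weight_moment f lam del v j x / mu_normaliser f lam del x"
proof -
  have nonneg: "AE y in lborel. 0 \<le> mu_weight f lam del x y / mu_normaliser f lam del x"
    by (intro AE_I2 less_imp_le divide_pos_pos mu_weight_pos mu_normaliser_pos)
  have "integrable lborel
      (\<lambda>y. mu_weight f lam del x y * (inner (y - x) v) ^ j / mu_normaliser f lam del x)"
    using integrable_mu_weight_inner_power[OF assms] by simp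
  then show "integrable (mu f lam del x) (\<lambda>y. (inner (y - x) v) ^ j)"
    unfolding mu_eq_density using nonneg by (subst integrable_density) auto
  show "(\<integral>y. (inner (y - x) v) ^ j \<partial>mu f lam del x)
      = weight_moment f lam del v j x / mu_normaliser f lam del x"
    unfolding mu_eq_density using nonneg
    by (subst integral_density) (auto simp: weight_moment_def)
qed

lemma weight_moment_variance_le:
  assumes "poincare (mu f lam del x) C" and "C \<le> lam * del"
  shows "weight_moment f lam del v 2 x * mu_normaliser f lam del x
      - (weight_moment f lam del v 1 x)\<^sup>2
    \<le> lam * del * (norm v)\<^sup>2 * (mu_normaliser f lam del x)\<^sup>2"
proof -
  interpret prob_space "mu f lam del x"
    by (rule prob_space_mu)
  define Z where "Z = mu_normaliser f lam del x"
  have "Z > 0"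
    unfolding Z_def by (rule mu_normaliser_pos)
  have "variance (\<lambda>y. inner (y - x) v)
      = expectation (\<lambda>y. (inner (y - x) v)\<^sup>2) - (expectation (\<lambda>y. inner (y - x) v))\<^sup>2"
    using integrable_mu_inner_power[of 1] integrable_mu_inner_power[of 2]
    by (intro variance_eq) auto
  then have "weight_moment f lam del v 2 x / Z - (weight_moment f lam del v 1 x / Z)\<^sup>2
      = variance (\<lambda>y. inner (y - x) v)"
    using integral_mu_inner_power[of 1] integral_mu_inner_power[of 2] by (simp add: Z_def)
  also have "\<dots> \<le> C * (norm v)\<^sup>2"
    using poincare_variance_inner_le[OF prob_space_mu assms(1)
        integrable_mu_inner_power[OF order_refl]] .
  also have "\<dots> \<le> lam * del * (norm v)\<^sup>2"
    using assms(2) by (simp add: mult_right_mono)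
  finally show ?thesis
    using \<open>Z > 0\<close> by (simp add: Z_def[symmetric] field_simps power2_eq_square)
qed

lemma has_real_derivative_mu_normaliser_line:
  "((\<lambda>t. mu_normaliser f lam del (x + t *\<^sub>R v)) has_real_derivative
      weight_moment f lam del v 1 (x + t *\<^sub>R v) / (lam * del)) (at t)"
proof -
  define F' where
    "F' s y = mu_weight f lam del (x + s *\<^sub>R v) y * (inner (y - (x + s *\<^sub>R v)) v / (lam * del))"
    for s y
  define g where "g y = (1 + 2 * (lam * del)) * norm v / (lam * del) * exp (- f y / del)" for y
  have bound: "\<bar>F' s y\<bar> \<le> g y" for s y
    using mu_weight_inner_power_bound[of 1 "x + s *\<^sub>R v" y v] lam_pos del_pos
    by (simp add: F'_def g_def abs_mult abs_divide divide_right_mono mult_ac)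
  have deriv: "((\<lambda>s. mu_weight f lam del (x + s *\<^sub>R v) y) has_real_derivative F' s y) (at s)"
    for s y
    unfolding F'_def using lam_pos del_pos by (intro has_real_derivative_mu_weight_line) simp
  have "((\<lambda>s. \<integral>y. mu_weight f lam del (x + s *\<^sub>R v) y \<partial>lborel) has_real_derivative
      (\<integral>y. F' t y \<partial>lborel)) (at t)"
  proof (rule has_real_derivative_integral_dominated[OF integrable_mu_weight _ deriv bound])
    show "F' s \<in> borel_measurable lborel" for s
      unfolding F'_def by measurable
    show "integrable lborel g"
      unfolding g_def using integrable_exp_f by simp
  qed
  then show ?thesis
    by (simp add: mu_normaliser_def weight_moment_def F'_def mult.assoc)
qed

lemma has_real_derivative_weight_moment_1_line:
  "((\<lambda>t. weight_moment f lam del v 1 (x + t *\<^sub>R v)) has_real_derivative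
      weight_moment f lam del v 2 (x + t *\<^sub>R v) / (lam * del)
        - (norm v)\<^sup>2 * mu_normaliser f lam del (x + t *\<^sub>R v)) (at t)"
proof -
  define w where "w s y = mu_weight f lam del (x + s *\<^sub>R v) y" for s y
  define r where "r s y = inner (y - (x + s *\<^sub>R v)) v" for s y
  define F' where "F' s y = w s y * (r s y)\<^sup>2 / (lam * del) - (norm v)\<^sup>2 * w s y" for s y
  define g where
    "g y = (((1 + 2 * (lam * del)) * norm v)\<^sup>2 / (lam * del) + (norm v)\<^sup>2) * exp (- f y / del)"
    for y
  have bound: "\<bar>F' s y\<bar> \<le> g y" for s y
  proof -
    have "\<bar>F' s y\<bar> \<le> \<bar>w s y * (r s y)\<^sup>2\<bar> / (lam * del) + (norm v)\<^sup>2 * \<bar>w s y\<bar>"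
      using lam_pos del_pos unfolding F'_def
      by (intro order_trans[OF abs_triangle_ineq4]) (simp add: abs_mult abs_divide)
    also have "\<dots> \<le> ((1 + 2 * (lam * del)) * norm v)\<^sup>2 * exp (- f y / del) / (lam * del)
        + (norm v)\<^sup>2 * exp (- f y / del)"
      using mu_weight_inner_power_bound[of 2 "x + s *\<^sub>R v" y v]
        mu_weight_inner_power_bound[of 0 "x + s *\<^sub>R v" y v] lam_pos del_pos
      unfolding w_def r_def by (intro add_mono divide_right_mono mult_left_mono) auto
    also have "\<dots> = g y"
      by (simp add: g_def algebra_simps)
    finally show ?thesis .
  qed
  have deriv: "((\<lambda>s. w s y * r s y) has_real_derivative F' s y) (at s)" for s y
    using has_real_derivative_mu_weight_line[of lam del f x v y s]
      has_real_derivative_inner_line[of y x v s]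
      lam_pos del_pos
    unfolding w_def r_def F'_def
    by (auto intro!: derivative_eq_intros simp: power2_eq_square field_simps)
  have "((\<lambda>s. \<integral>y. w s y * r s y \<partial>lborel) has_real_derivative (\<integral>y. F' t y \<partial>lborel)) (at t)"
  proof (rule has_real_derivative_integral_dominated[OF _ _ deriv bound])
    show "integrable lborel (\<lambda>y. w s y * r s y)" for s
      using integrable_mu_weight_inner_power[of 1] by (simp add: w_def r_def)
    show "F' s \<in> borel_measurable lborel" for s
      unfolding F'_def w_def r_def by measurable
    show "integrable lborel g"
      unfolding g_def using integrable_exp_f by simp
  qed
  moreover have "(\<integral>y. F' t y \<partial>lborel)
      = weight_moment f lam del v 2 (x + t *\<^sub>R v) / (lam * del)
        - (norm v)\<^sup>2 * mu_normaliser f lam del (x + t *\<^sub>R v)"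
    using integrable_mu_weight_inner_power[of 2 "x + t *\<^sub>R v" v] integrable_mu_weight
    unfolding F'_def w_def r_def weight_moment_def mu_normaliser_def by simp
  ultimately show ?thesis
    by (simp add: weight_moment_def w_def r_def)
qed

lemma soft_moreau_convex_on_line:
  assumes "\<forall>x. \<exists>C. C \<le> lam * del \<and> poincare (mu f lam del x) C"
  shows "convex_on UNIV (\<lambda>t. soft_moreau f lam del (x + t *\<^sub>R v))"
proof -
  define Z where "Z t = mu_normaliser f lam del (x + t *\<^sub>R v)" for t
  define M where "M j t = weight_moment f lam del v j (x + t *\<^sub>R v)" for j t
  define k where "k = lam * del"
  have "k > 0"
    using lam_pos del_pos by (simp add: k_def)
  have "convex_on UNIV (\<lambda>t. - ln (Z t))"
  proof (rule convex_on_neg_ln)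
    show "Z t > 0" for t
      unfolding Z_def by (rule mu_normaliser_pos)
    show "(Z has_real_derivative M 1 t / k) (at t)" for t
      unfolding Z_def M_def k_def by (rule has_real_derivative_mu_normaliser_line)
    show "((\<lambda>t. M 1 t / k) has_real_derivative (M 2 t / k - (norm v)\<^sup>2 * Z t) / k) (at t)" for t
      unfolding Z_def M_def k_def by (intro DERIV_cdivide has_real_derivative_weight_moment_1_line)
    show "(M 2 t / k - (norm v)\<^sup>2 * Z t) / k * Z t \<le> (M 1 t / k)\<^sup>2" for t
    proof -
      obtain C where "poincare (mu f lam del (x + t *\<^sub>R v)) C" "C \<le> lam * del"
        using assms by blast
      then have "M 2 t * Z t - (M 1 t)\<^sup>2 \<le> k * (norm v)\<^sup>2 * (Z t)\<^sup>2"
        unfolding Z_def M_def k_def by (rule weight_moment_variance_le)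
      then have "(M 2 t * Z t - (M 1 t)\<^sup>2 - k * (norm v)\<^sup>2 * (Z t)\<^sup>2) / k\<^sup>2 \<le> 0"
        using \<open>k > 0\<close> by (intro divide_nonpos_pos) auto
      moreover have "(M 2 t / k - (norm v)\<^sup>2 * Z t) / k * Z t - (M 1 t / k)\<^sup>2
          = (M 2 t * Z t - (M 1 t)\<^sup>2 - k * (norm v)\<^sup>2 * (Z t)\<^sup>2) / k\<^sup>2"
        using \<open>k > 0\<close> by (simp add: field_simps power2_eq_square)
      ultimately show ?thesis
        by linarith
    qed
  qed
  then have "convex_on UNIV
      (\<lambda>t. del * - ln (Z t) + - del * ln ((2 * pi * k) powr (- real DIM('a) / 2)))"
    using del_pos by (intro convex_on_add convex_on_cmul[of del]) (auto simp: convex_on_const)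
  moreover have "soft_moreau f lam del (x + t *\<^sub>R v)
      = del * - ln (Z t) + - del * ln ((2 * pi * k) powr (- real DIM('a) / 2))" for t
    using mu_normaliser_pos[of "x + t *\<^sub>R v"] lam_pos del_pos
    by (simp add: soft_moreau_eq_ln_mu_normaliser Z_def k_def ln_mult algebra_simps)
  ultimately show ?thesis
    by simp
qed

end

theorem proposition4:
  fixes f :: "'a::euclidean_space \<Rightarrow> real" and lam del CP :: real
  assumes "lam > 0" and "del > 0"
    and "continuous_on UNIV f"
    and "\<exists>x0. \<forall>y. f x0 \<le> f y"
    and "(\<integral>\<^sup>+ y. ennreal (exp (- f y / del)) \<partial>lborel) < \<infinity>"
    and "\<forall>x. \<exists>Cx. Cx \<le> CP \<and> poincare (mu f lam del x) Cx"
    and "lam \<ge> CP / del"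
  shows "convex_on UNIV (soft_moreau f lam del)"
proof -
  have [measurable]: "f \<in> borel_measurable lborel"
    using borel_measurable_continuous_onI[OF assms(3)] by simp
  interpret soft_moreau_kernel f lam del
  proof
    show "integrable lborel (\<lambda>y. exp (- f y / del))"
      using assms(5) by (intro integrableI_nonneg) auto
  qed (use assms in auto)
  have "\<forall>x. \<exists>C. C \<le> lam * del \<and> poincare (mu f lam del x) C"
    using assms(2,6,7) by (meson order_trans pos_divide_le_eq)
  then have "convex_on UNIV (\<lambda>t. soft_moreau f lam del (x + t *\<^sub>R v))" for x v
    by (rule soft_moreau_convex_on_line)
  then show ?thesis
    by (rule convex_on_if_convex_on_lines)
qed

end
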